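(* For every $n\ge 1$, $\chi_{lc}(K_n)=n$.
   Context: Graphs are finite, loopless, with symmetric edge sets; $K_c$ is the complete graph on $c$ vertices; write $v\sim w$ when $(v,w)$ is an edge. For graphs $G,H$, the locally commuting algebra $\mathcal A_{lc}(G,H)$ is the unital complex algebra generated by elements $e_{v,x}$ ($v\in V(G)$, $x\in V(H)$) subject to the relations: $\sum_{x\in V(H)}e_{v,x}=1$ for all $v$; $e_{v,x}^2=e_{v,x}$; $e_{v,x}e_{v,y}=0$ for $x\neq y$; $e_{v,x}e_{w,y}=0$ whenever $v\sim w$ and $x\not\sim y$ (in particular when $x=y$); and $e_{v,x}e_{w,y}=e_{w,y}e_{v,x}$ whenever $v\sim w$. (Equivalently it is the quotient of the group $*$-algebra of the free product of $|V(G)|$ cyclic groups of order $|V(H)|$ by the ideal generated by the products of spectral projections forbidden by the graph homomorphism game together with the commutators $[e_{v,x},e_{w,y}]$ for $v\sim w$.) Define $\chi_{lc}(G)=\min\{c:\mathcal A_{lc}(G,K_c)\neq 0\}$. *)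

theory Defs
  imports Complex_Main
begin

text \<open>Free unital complex algebra on generators of type 'g: elements are (finitely supported)
  functions from words (lists of generators) to complex coefficients; a word w is the monomial w.\<close>

type_synonym 'g fa = "'g list \<Rightarrow> complex"

definition fa_mono :: "'g list \<Rightarrow> 'g fa" where
  "fa_mono w = (\<lambda>u. if u = w then 1 else 0)"

definition fa_one :: "'g fa" where
  "fa_one = fa_mono []"

definition fa_gen :: "'g \<Rightarrow> 'g fa" where
  "fa_gen g = fa_mono [g]"

definition fa_mult :: "'g fa \<Rightarrow> 'g fa \<Rightarrow> 'g fa" where
  "fa_mult p q = (\<lambda>u. \<Sum>i\<le>length u. p (take i u) * q (drop i u))"

definition fa_diff :: "'g fa \<Rightarrow> 'g fa \<Rightarrow> 'g fa" where
  "fa_diff p q = (\<lambda>u. p u - q u)"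

inductive_set fa_ideal :: "'g set \<Rightarrow> 'g fa set \<Rightarrow> 'g fa set" for Gens R where
  zero: "(\<lambda>u. 0) \<in> fa_ideal Gens R"
| gen: "\<lbrakk>r \<in> R; a \<in> lists Gens; b \<in> lists Gens\<rbrakk> \<Longrightarrow>
          fa_mult (fa_mult (fa_mono a) r) (fa_mono b) \<in> fa_ideal Gens R"
| add: "\<lbrakk>p \<in> fa_ideal Gens R; q \<in> fa_ideal Gens R\<rbrakk> \<Longrightarrow> (\<lambda>u. p u + q u) \<in> fa_ideal Gens R"
| smult: "p \<in> fa_ideal Gens R \<Longrightarrow> (\<lambda>u. c * p u) \<in> fa_ideal Gens R"

text \<open>A graph is a pair (V, E): finite vertex set V and an edge relation E (symmetric, loopless).\<close>

definition lc_relations ::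
  "'v set \<Rightarrow> ('v \<Rightarrow> 'v \<Rightarrow> bool) \<Rightarrow> 'x set \<Rightarrow> ('x \<Rightarrow> 'x \<Rightarrow> bool) \<Rightarrow> ('v \<times> 'x) fa set" where
  "lc_relations V E W F =
     {fa_diff (\<lambda>u. \<Sum>x\<in>W. fa_gen (v, x) u) fa_one | v. v \<in> V}
   \<union> {fa_diff (fa_mult (fa_gen (v, x)) (fa_gen (v, x))) (fa_gen (v, x)) | v x. v \<in> V \<and> x \<in> W}
   \<union> {fa_mult (fa_gen (v, x)) (fa_gen (v, y)) | v x y. v \<in> V \<and> x \<in> W \<and> y \<in> W \<and> x \<noteq> y}
   \<union> {fa_mult (fa_gen (v, x)) (fa_gen (w, y)) | v w x y.
        v \<in> V \<and> w \<in> V \<and> x \<in> W \<and> y \<in> W \<and> E v w \<and> \<not> F x y}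
   \<union> {fa_diff (fa_mult (fa_gen (v, x)) (fa_gen (w, y))) (fa_mult (fa_gen (w, y)) (fa_gen (v, x))) | v w x y.
        v \<in> V \<and> w \<in> V \<and> x \<in> W \<and> y \<in> W \<and> E v w}"

definition lc_algebra_nonzero ::
  "'v set \<Rightarrow> ('v \<Rightarrow> 'v \<Rightarrow> bool) \<Rightarrow> 'x set \<Rightarrow> ('x \<Rightarrow> 'x \<Rightarrow> bool) \<Rightarrow> bool" where
  "lc_algebra_nonzero V E W F \<longleftrightarrow> fa_one \<notin> fa_ideal (V \<times> W) (lc_relations V E W F)"

definition K_verts :: "nat \<Rightarrow> nat set" where "K_verts c = {0..<c}"
definition K_edge :: "nat \<Rightarrow> nat \<Rightarrow> bool" where "K_edge x y \<longleftrightarrow> x \<noteq> y"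

definition chi_lc :: "'v set \<Rightarrow> ('v \<Rightarrow> 'v \<Rightarrow> bool) \<Rightarrow> nat" where
  "chi_lc V E = (LEAST c. lc_algebra_nonzero V E (K_verts c) K_edge)"

end

theory Submission
  imports Defs
begin

text \<open>For \<open>c < n\<close> the unit lies in the ideal of relations. Every word
  \<open>e(v\<^sub>1,x\<^sub>1)\<cdots>e(v\<^sub>k,x\<^sub>k)\<close> with distinct vertices and distinct colours lies in it, by downward
  induction on \<open>k\<close>: no such word has length \<open>n > c\<close>, and otherwise, for an unused vertex \<open>v\<close>,
  the word is congruent to the sum over \<open>x\<close> of its extensions by \<open>e(v,x)\<close>. An extension either
  is again injective, or repeats the colour \<open>x\<close> at some \<open>w \<noteq> v\<close>; then \<open>e(v,x)\<close> commutes past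
  the intermediate generators (all on vertices adjacent to \<open>v\<close>) and \<open>e(v,x) e(w,x) = 0\<close>. The empty
  word is \<open>1\<close>.
  Conversely a graph homomorphism \<open>f\<close> yields the character \<open>e(v,x) \<mapsto> [x = f v]\<close>, which kills
  all relations; for \<open>K\<^sub>n \<rightarrow> K\<^sub>n\<close> take the identity.\<close>

lemma fa_mult_mono_left:
  "fa_mult (fa_mono a) q = (\<lambda>u. if take (length a) u = a then q (drop (length a) u) else 0)"
proof
  fix u :: "'a list"
  have "fa_mult (fa_mono a) q u =
      (\<Sum>i\<le>length u. if i = length a then (if take i u = a then q (drop i u) else 0) else 0)"
    unfolding fa_mult_def fa_mono_def by (rule sum.cong) (auto simp: min_def split: if_splits)
  also have "\<dots> = (if take (length a) u = a then q (drop (length a) u) else 0)"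
    by (auto simp: sum.delta dest: arg_cong[where f=length])
  finally show "fa_mult (fa_mono a) q u = (if take (length a) u = a then q (drop (length a) u) else 0)" .
qed

lemma fa_mult_mono_right:
  "fa_mult p (fa_mono b) = (\<lambda>u. if length b \<le> length u \<and> drop (length u - length b) u = b
      then p (take (length u - length b) u) else 0)"
proof
  fix u :: "'a list"
  have "fa_mult p (fa_mono b) u = (\<Sum>i\<le>length u. if i = length u - length b
      then (if length b \<le> length u \<and> drop i u = b then p (take i u) else 0) else 0)"
    unfolding fa_mult_def fa_mono_def by (rule sum.cong) (auto split: if_splits)
  then show "fa_mult p (fa_mono b) u = (if length b \<le> length u \<and> drop (length u - length b) u = b
      then p (take (length u - length b) u) else 0)"
    by (simp add: sum.delta)
qed

lemma fa_mult_mono_mono: "fa_mult (fa_mono a) (fa_mono b) = fa_mono (a @ b)"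
  unfolding fa_mult_mono_left
  by (rule ext) (auto simp: fa_mono_def append_eq_conv_conj, metis append_take_drop_id)

lemma fa_mult_gen_gen: "fa_mult (fa_gen g) (fa_gen h) = fa_mono [g, h]"
  by (simp add: fa_gen_def fa_mult_mono_mono)

definition fa_sandwich :: "'g list \<Rightarrow> 'g list \<Rightarrow> 'g fa \<Rightarrow> 'g fa" where
  "fa_sandwich a b p = fa_mult (fa_mult (fa_mono a) p) (fa_mono b)"

lemma fa_sandwich_append: "fa_sandwich a b p (a @ w @ b) = p w"
  by (simp add: fa_sandwich_def fa_mult_mono_left fa_mult_mono_right)

lemma fa_sandwich_outside:
  assumes "\<nexists>w. u = a @ w @ b"
  shows "fa_sandwich a b p u = 0"
proof -
  let ?t = "take (length u - length b) u"
  have "\<not> (length b \<le> length u \<and> drop (length u - length b) u = b \<and> take (length a) ?t = a)"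
  proof
    assume h: "length b \<le> length u \<and> drop (length u - length b) u = b \<and> take (length a) ?t = a"
    then have "u = a @ drop (length a) ?t @ b"
      by (metis append_assoc append_take_drop_id)
    with assms show False by blast
  qed
  then show ?thesis
    by (auto simp: fa_sandwich_def fa_mult_mono_left fa_mult_mono_right)
qed

lemma fa_sandwich_cases:
  "fa_sandwich a b p u = (if \<exists>w. u = a @ w @ b then p (drop (length a) (take (length u - length b) u)) else 0)"
  by (auto simp: fa_sandwich_append fa_sandwich_outside)

lemma fa_sandwich_mono: "fa_sandwich a b (fa_mono w) = fa_mono (a @ w @ b)"
  by (simp add: fa_sandwich_def fa_mult_mono_mono)

lemma fa_sandwich_diff: "fa_sandwich a b (fa_diff p q) = fa_diff (fa_sandwich a b p) (fa_sandwich a b q)"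
  by (auto simp: fa_diff_def fa_sandwich_cases)

lemma fa_sandwich_sum:
  "fa_sandwich a b (\<lambda>u. \<Sum>x\<in>A. f x u) = (\<lambda>u. \<Sum>x\<in>A. fa_sandwich a b (f x) u)"
  by (auto simp: fa_sandwich_cases)

lemma fa_ideal_sandwich:
  "r \<in> R \<Longrightarrow> set a \<subseteq> Gens \<Longrightarrow> set b \<subseteq> Gens \<Longrightarrow> fa_sandwich a b r \<in> fa_ideal Gens R"
  unfolding fa_sandwich_def by (rule fa_ideal.gen) auto

lemma fa_ideal_add_eq:
  assumes "p \<in> fa_ideal Gens R" "q \<in> fa_ideal Gens R" "\<And>u. s u = p u + q u"
  shows "s \<in> fa_ideal Gens R"
proof -
  have "s = (\<lambda>u. p u + q u)" using assms(3) by (rule ext)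
  then show ?thesis using assms(1,2) by (simp add: fa_ideal.add)
qed

lemma fa_ideal_diff_trans:
  "fa_diff p q \<in> fa_ideal Gens R \<Longrightarrow> fa_diff q s \<in> fa_ideal Gens R \<Longrightarrow> fa_diff p s \<in> fa_ideal Gens R"
  by (erule fa_ideal_add_eq) (auto simp: fa_diff_def)

lemma fa_ideal_diff_cancel_right:
  "fa_diff p q \<in> fa_ideal Gens R \<Longrightarrow> q \<in> fa_ideal Gens R \<Longrightarrow> p \<in> fa_ideal Gens R"
  by (erule fa_ideal_add_eq) (auto simp: fa_diff_def)

lemma fa_ideal_diff_cancel_left:
  assumes "fa_diff p q \<in> fa_ideal Gens R" "p \<in> fa_ideal Gens R"
  shows "q \<in> fa_ideal Gens R"
proof -
  have "(\<lambda>u. (-1) * fa_diff p q u) \<in> fa_ideal Gens R"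
    using assms(1) by (rule fa_ideal.smult)
  with assms(2) show ?thesis
    by (rule fa_ideal_add_eq) (simp add: fa_diff_def)
qed

lemma fa_ideal_sum:
  "finite A \<Longrightarrow> (\<And>x. x \<in> A \<Longrightarrow> f x \<in> fa_ideal Gens R) \<Longrightarrow> (\<lambda>u. \<Sum>x\<in>A. f x u) \<in> fa_ideal Gens R"
proof (induction A rule: finite_induct)
  case empty
  show ?case using fa_ideal.zero by simp
next
  case (insert x A)
  have "(\<lambda>u. \<Sum>x\<in>A. f x u) \<in> fa_ideal Gens R" using insert.prems by (intro insert.IH) simp
  with insert.prems show ?case
    by (rule fa_ideal_add_eq[of "f x"]) (simp_all add: insert.hyps)
qed

lemma lc_relations_sum_one:
  "v \<in> V \<Longrightarrow> fa_diff (\<lambda>u. \<Sum>x\<in>W. fa_gen (v, x) u) fa_one \<in> lc_relations V E W F"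
  unfolding lc_relations_def by (intro UnI1) blast

lemma lc_relations_non_edge:
  "\<lbrakk>v \<in> V; w \<in> V; x \<in> W; y \<in> W; E v w; \<not> F x y\<rbrakk> \<Longrightarrow>
    fa_mult (fa_gen (v, x)) (fa_gen (w, y)) \<in> lc_relations V E W F"
  unfolding lc_relations_def by (rule UnI1, rule UnI2) blast

lemma lc_relations_commute:
  "\<lbrakk>v \<in> V; w \<in> V; x \<in> W; y \<in> W; E v w\<rbrakk> \<Longrightarrow>
    fa_diff (fa_mult (fa_gen (v, x)) (fa_gen (w, y))) (fa_mult (fa_gen (w, y)) (fa_gen (v, x)))
      \<in> lc_relations V E W F"
  unfolding lc_relations_def by (rule UnI2) blast

abbreviation lc_ideal ::
  "'v set \<Rightarrow> ('v \<Rightarrow> 'v \<Rightarrow> bool) \<Rightarrow> 'x set \<Rightarrow> ('x \<Rightarrow> 'x \<Rightarrow> bool) \<Rightarrow> ('v \<times> 'x) fa set" where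
  "lc_ideal V E W F \<equiv> fa_ideal (V \<times> W) (lc_relations V E W F)"

definition partial_injection_word :: "'v set \<Rightarrow> 'x set \<Rightarrow> ('v \<times> 'x) list \<Rightarrow> bool" where
  "partial_injection_word V W u \<longleftrightarrow>
     set u \<subseteq> V \<times> W \<and> distinct (map fst u) \<and> distinct (map snd u)"

lemma length_le_card_if_partial_injection_word:
  assumes "partial_injection_word V W u" "finite W"
  shows "length u \<le> card W"
proof -
  have "length u = card (snd ` set u)"
    using assms(1) distinct_card[of "map snd u"] by (simp add: partial_injection_word_def)
  also have "\<dots> \<le> card W"
    using assms by (intro card_mono) (auto simp: partial_injection_word_def)
  finally show ?thesis .
qed

lemma unused_vertex_if_length_less:
  assumes "length u < card V"
  obtains v where "v \<in> V" "v \<notin> fst ` set u"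
proof -
  have "card (fst ` set u) \<le> length u"
    by (metis card_image_le card_length finite_set le_trans)
  with assms have "\<not> V \<subseteq> fst ` set u"
    using card_mono[of "fst ` set u" V] by auto
  then show ?thesis using that by blast
qed

context
  fixes V :: "'v set" and E :: "'v \<Rightarrow> 'v \<Rightarrow> bool" and W :: "'x set" and F :: "'x \<Rightarrow> 'x \<Rightarrow> bool"
  assumes complete: "\<And>v w. v \<in> V \<Longrightarrow> w \<in> V \<Longrightarrow> v \<noteq> w \<Longrightarrow> E v w"
begin

lemma fa_mono_commute_mod_lc_ideal:
  assumes "v \<in> V" "x \<in> W" "v \<notin> fst ` set pre" "set pre \<subseteq> V \<times> W" "set a \<subseteq> V \<times> W" "set b \<subseteq> V \<times> W"
  shows "fa_diff (fa_mono (a @ (v, x) # pre @ b)) (fa_mono (a @ pre @ (v, x) # b))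
           \<in> lc_ideal V E W F"
  using assms(3-5)
proof (induction pre arbitrary: a)
  case Nil
  then show ?case using fa_ideal.zero by (simp add: fa_diff_def)
next
  case (Cons g pre)
  obtain w y where g: "g = (w, y)" by fastforce
  have "w \<in> V" "y \<in> W" "v \<noteq> w" using Cons.prems g by auto
  then have "fa_diff (fa_mult (fa_gen (v, x)) (fa_gen (w, y))) (fa_mult (fa_gen (w, y)) (fa_gen (v, x)))
      \<in> lc_relations V E W F"
    using assms(1,2) complete by (intro lc_relations_commute) auto
  then have "fa_sandwich a (pre @ b)
      (fa_diff (fa_mult (fa_gen (v, x)) (fa_gen (w, y))) (fa_mult (fa_gen (w, y)) (fa_gen (v, x))))
      \<in> lc_ideal V E W F"
    by (rule fa_ideal_sandwich) (use Cons.prems assms(6) in auto)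
  then have "fa_diff (fa_mono (a @ (v, x) # g # pre @ b)) (fa_mono ((a @ [g]) @ (v, x) # pre @ b))
      \<in> lc_ideal V E W F"
    by (simp add: fa_sandwich_diff fa_mult_gen_gen fa_sandwich_mono g)
  moreover have "fa_diff (fa_mono ((a @ [g]) @ (v, x) # pre @ b)) (fa_mono ((a @ [g]) @ pre @ (v, x) # b))
      \<in> lc_ideal V E W F"
    using Cons.prems by (intro Cons.IH) auto
  ultimately show ?case by (simp add: fa_ideal_diff_trans)
qed

lemma partial_injection_word_mem_lc_ideal:
  assumes "finite W" "card W < card V" "\<And>x. x \<in> W \<Longrightarrow> \<not> F x x"
    and "partial_injection_word V W u"
  shows "fa_mono u \<in> lc_ideal V E W F"
  using assms(4)
proof (induction u rule: measure_induct_rule[where f="\<lambda>u. card V - length u"])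
  case (less u)
  have u: "set u \<subseteq> V \<times> W" "distinct (map fst u)" "distinct (map snd u)"
    using less.prems by (simp_all add: partial_injection_word_def)
  have "length u < card V"
    using length_le_card_if_partial_injection_word[OF less.prems assms(1)] assms(2) by simp
  then obtain v where v: "v \<in> V" "v \<notin> fst ` set u"
    by (rule unused_vertex_if_length_less)
  have extend: "fa_mono ((v, x) # u) \<in> lc_ideal V E W F" if x: "x \<in> W" for x
  proof (cases "x \<in> snd ` set u")
    case False
    then have "partial_injection_word V W ((v, x) # u)"
      using u v x by (auto simp: partial_injection_word_def)
    with \<open>length u < card V\<close> show ?thesis by (intro less.IH) auto
  next
    case True
    then obtain w pre post where split: "u = pre @ (w, x) # post"
      by (metis imageE prod.collapse split_list)
    have "w \<in> V" "v \<noteq> w" using u v split by auto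
    have "fa_diff (fa_mono ([] @ (v, x) # pre @ (w, x) # post)) (fa_mono ([] @ pre @ (v, x) # (w, x) # post))
        \<in> lc_ideal V E W F"
      using v x u split by (intro fa_mono_commute_mod_lc_ideal) auto
    moreover have "fa_mono (pre @ (v, x) # (w, x) # post) \<in> lc_ideal V E W F"
    proof -
      have "fa_mult (fa_gen (v, x)) (fa_gen (w, x)) \<in> lc_relations V E W F"
        using v x \<open>w \<in> V\<close> \<open>v \<noteq> w\<close> complete assms(3) by (intro lc_relations_non_edge) auto
      then have "fa_sandwich pre post (fa_mult (fa_gen (v, x)) (fa_gen (w, x))) \<in> lc_ideal V E W F"
        by (rule fa_ideal_sandwich) (use u split in auto)
      then show ?thesis by (simp add: fa_mult_gen_gen fa_sandwich_mono)
    qed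
    ultimately show ?thesis using split by (simp add: fa_ideal_diff_cancel_right)
  qed
  have "fa_sandwich [] u (fa_diff (\<lambda>w. \<Sum>x\<in>W. fa_gen (v, x) w) fa_one) \<in> lc_ideal V E W F"
    using v u by (intro fa_ideal_sandwich lc_relations_sum_one) auto
  then have "fa_diff (\<lambda>w. \<Sum>x\<in>W. fa_mono ((v, x) # u) w) (fa_mono u) \<in> lc_ideal V E W F"
    by (simp add: fa_sandwich_diff fa_sandwich_sum fa_gen_def fa_one_def fa_sandwich_mono)
  moreover have "(\<lambda>w. \<Sum>x\<in>W. fa_mono ((v, x) # u) w) \<in> lc_ideal V E W F"
    using assms(1) extend by (rule fa_ideal_sum)
  ultimately show ?case by (rule fa_ideal_diff_cancel_left)
qed

lemma lc_algebra_zero_if_card_less: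
  assumes "finite W" "card W < card V" "\<And>x. x \<in> W \<Longrightarrow> \<not> F x x"
  shows "\<not> lc_algebra_nonzero V E W F"
  using partial_injection_word_mem_lc_ideal[OF assms, of "[]"]
  by (simp add: lc_algebra_nonzero_def fa_one_def partial_injection_word_def)

end

text \<open>For \<open>\<Gamma>\<close> the graph of a homomorphism \<open>f\<close>, \<open>word_sum \<Gamma> M\<close> is the character
  \<open>e(v,x) \<mapsto> [x = f v]\<close> restricted to words of length at most \<open>M\<close>. The truncation is needed
  because elements of the free algebra need not be finitely supported; on the ideal it vanishes
  for all large \<open>M\<close>.\<close>

definition word_sum :: "'g set \<Rightarrow> nat \<Rightarrow> 'g fa \<Rightarrow> complex" where
  "word_sum \<Gamma> M p = (\<Sum>u\<in>{u. set u \<subseteq> \<Gamma> \<and> length u \<le> M}. p u)"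

lemma word_sum_mono:
  "finite \<Gamma> \<Longrightarrow> word_sum \<Gamma> M (fa_mono w) = (if set w \<subseteq> \<Gamma> \<and> length w \<le> M then 1 else 0)"
  by (simp add: word_sum_def fa_mono_def finite_lists_length_le)

lemma word_sum_diff: "word_sum \<Gamma> M (fa_diff p q) = word_sum \<Gamma> M p - word_sum \<Gamma> M q"
  by (simp add: word_sum_def fa_diff_def sum_subtractf)

lemma word_sum_sum: "word_sum \<Gamma> M (\<lambda>u. \<Sum>x\<in>A. f x u) = (\<Sum>x\<in>A. word_sum \<Gamma> M (f x))"
  unfolding word_sum_def by (rule sum.swap)

lemma word_sum_sandwich:
  assumes "finite \<Gamma>" "length a + length b \<le> M"
  shows "word_sum \<Gamma> M (fa_sandwich a b r) =
    (if set a \<subseteq> \<Gamma> \<and> set b \<subseteq> \<Gamma> then word_sum \<Gamma> (M - length a - length b) r else 0)"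
proof (cases "set a \<subseteq> \<Gamma> \<and> set b \<subseteq> \<Gamma>")
  case True
  let ?S = "\<lambda>M. {u. set u \<subseteq> \<Gamma> \<and> length u \<le> M}"
  let ?T = "(\<lambda>w. a @ w @ b) ` ?S (M - length a - length b)"
  have "?T \<subseteq> ?S M" using True assms(2) by auto
  moreover have "fa_sandwich a b r u = 0" if "u \<in> ?S M - ?T" for u
    using that True by (intro fa_sandwich_outside) auto
  ultimately have "word_sum \<Gamma> M (fa_sandwich a b r) = (\<Sum>u\<in>?T. fa_sandwich a b r u)"
    unfolding word_sum_def
    by (intro sum.mono_neutral_right finite_lists_length_le assms(1)) auto
  also have "\<dots> = (\<Sum>w\<in>?S (M - length a - length b). fa_sandwich a b r (a @ w @ b))"
    by (subst sum.reindex) (auto simp: inj_on_def)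
  also have "\<dots> = word_sum \<Gamma> (M - length a - length b) r"
    by (simp add: word_sum_def fa_sandwich_append)
  finally show ?thesis using True by simp
next
  case False
  then have "fa_sandwich a b r u = 0" if "set u \<subseteq> \<Gamma>" for u
    using that by (intro fa_sandwich_outside) auto
  with False show ?thesis by (auto simp: word_sum_def)
qed

lemma eventually_word_sum_eq_0_if_mem_fa_ideal:
  assumes "finite \<Gamma>" "p \<in> fa_ideal Gens R"
    and "\<And>r. r \<in> R \<Longrightarrow> \<forall>\<^sub>F M in sequentially. word_sum \<Gamma> M r = 0"
  shows "\<forall>\<^sub>F M in sequentially. word_sum \<Gamma> M p = 0"
  using assms(2)
proof induction
  case zero
  show ?case by (simp add: word_sum_def)
next
  case (gen r a b)
  obtain N where "\<forall>M\<ge>N. word_sum \<Gamma> M r = 0"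
    using assms(3)[OF gen(1)] by (auto simp: eventually_sequentially)
  then have "\<forall>M\<ge>N + length a + length b. word_sum \<Gamma> M (fa_sandwich a b r) = 0"
    by (simp add: word_sum_sandwich assms(1))
  then show ?case by (auto simp: fa_sandwich_def eventually_sequentially)
next
  case (add p q)
  from add.IH show ?case
    by eventually_elim (simp add: word_sum_def sum.distrib)
next
  case (smult p c)
  from smult.IH show ?case
    by eventually_elim (simp add: word_sum_def sum_distrib_left[symmetric])
qed

lemma word_sum_lc_relation_eq_0:
  assumes "finite V" "finite W" "f ` V \<subseteq> W" "\<And>v w. v \<in> V \<Longrightarrow> w \<in> V \<Longrightarrow> E v w \<Longrightarrow> F (f v) (f w)"
    and "r \<in> lc_relations V E W F" "2 \<le> M"
  shows "word_sum ((\<lambda>v. (v, f v)) ` V) M r = 0"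
proof -
  have graph: "(v, x) \<in> (\<lambda>v. (v, f v)) ` V \<longleftrightarrow> v \<in> V \<and> x = f v" for v x
    by auto
  show ?thesis
    using assms(5) unfolding lc_relations_def
  proof (elim UnE CollectE exE conjE)
    fix v assume "r = fa_diff (\<lambda>u. \<Sum>x\<in>W. fa_gen (v, x) u) fa_one" and "v \<in> V"
    then have "word_sum ((\<lambda>v. (v, f v)) ` V) M r = (\<Sum>x\<in>W. if x = f v then 1 else 0) - 1"
      using assms(1,6) by (simp add: word_sum_diff word_sum_sum fa_gen_def fa_one_def word_sum_mono graph)
    also have "\<dots> = 0"
      using assms(2,3) \<open>v \<in> V\<close> by (simp add: sum.delta' image_subset_iff)
    finally show ?thesis .
  next
    fix v x assume "r = fa_diff (fa_mult (fa_gen (v, x)) (fa_gen (v, x))) (fa_gen (v, x))"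
    then show ?thesis
      using assms(1,6) by (simp add: word_sum_diff fa_gen_def fa_mult_mono_mono word_sum_mono)
  next
    fix v x y assume "r = fa_mult (fa_gen (v, x)) (fa_gen (v, y))" "x \<noteq> y"
    then show ?thesis
      using assms(1) by (auto simp: fa_mult_gen_gen word_sum_mono graph)
  next
    fix v w x y assume "r = fa_mult (fa_gen (v, x)) (fa_gen (w, y))" "v \<in> V" "w \<in> V" "E v w" "\<not> F x y"
    then show ?thesis
      using assms(1,4) by (auto simp: fa_mult_gen_gen word_sum_mono graph)
  next
    fix v w x y
    assume "r = fa_diff (fa_mult (fa_gen (v, x)) (fa_gen (w, y))) (fa_mult (fa_gen (w, y)) (fa_gen (v, x)))"
    then show ?thesis
      using assms(1) by (simp add: word_sum_diff fa_mult_gen_gen word_sum_mono conj_commute)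
  qed
qed

theorem lc_algebra_nonzero_if_hom:
  assumes "finite V" "finite W" "f ` V \<subseteq> W" "\<And>v w. v \<in> V \<Longrightarrow> w \<in> V \<Longrightarrow> E v w \<Longrightarrow> F (f v) (f w)"
  shows "lc_algebra_nonzero V E W F"
  unfolding lc_algebra_nonzero_def
proof
  let ?\<Gamma> = "(\<lambda>v. (v, f v)) ` V"
  assume "fa_one \<in> lc_ideal V E W F"
  moreover have "\<forall>\<^sub>F M in sequentially. word_sum ?\<Gamma> M r = 0" if "r \<in> lc_relations V E W F" for r
    unfolding eventually_sequentially
    using word_sum_lc_relation_eq_0[OF assms that] by blast
  ultimately have "\<forall>\<^sub>F M in sequentially. word_sum ?\<Gamma> M fa_one = 0"
    using eventually_word_sum_eq_0_if_mem_fa_ideal[of ?\<Gamma>] assms(1) by blast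
  moreover have "word_sum ?\<Gamma> M fa_one = 1" for M
    using assms(1) by (simp add: fa_one_def word_sum_mono)
  ultimately show False by simp
qed

theorem mainTheorem2:
  fixes n :: nat
  assumes "n \<ge> 1"
  shows "chi_lc (K_verts n) K_edge = n"
  unfolding chi_lc_def
proof (rule Least_equality)
  show "lc_algebra_nonzero (K_verts n) K_edge (K_verts n) K_edge"
    by (rule lc_algebra_nonzero_if_hom[where f = id]) (auto simp: K_verts_def)
  show "n \<le> c" if "lc_algebra_nonzero (K_verts n) K_edge (K_verts c) K_edge" for c
    using that lc_algebra_zero_if_card_less[of "K_verts n" K_edge "K_verts c" K_edge]
    by (force simp: K_verts_def K_edge_def)
qed

end
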